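(* Let $f:\mathbb B\to\mathbb B$ be slice regular with $f(\mathbb B_I)\subseteq\mathbb B_I$ for some $I\in\mathbb S$, and suppose the sequence of iterates $\{f^{\odot n}\}$ has a subsequence which converges, uniformly on compact subsets of $\mathbb B$, to a nonconstant function. Then $f$ is a regular Möbius transformation of $\mathbb B$, i.e. $f(q)=(1-q\bar a)^{-\ast}\ast(a-q)u$ for some $a\in\mathbb B$, $u\in\partial\mathbb B$.
   Context: $\mathbb H$ quaternions, $\mathbb S=\{q:q^2=-1\}$, $\mathbb C_I=\mathbb R+I\mathbb R$, $\mathbb B$ open unit ball, $\mathbb B_I=\mathbb B\cap\mathbb C_I$. Slice regular functions on $\mathbb B$ are convergent power series $\sum_nq^na_n$ (equivalently, functions $C^1$ on each slice $\mathbb B_I$ and annihilated there by $\frac12(\partial_x+I\partial_y)$). $\ast$-product $\big(\sum q^na_n\big)\ast\big(\sum q^nb_n\big)=\sum_nq^n\sum_ka_kb_{n-k}$, $\ast$-inverse $g^{-\ast}$, $\varphi^{\ast0}=1$, $\varphi^{\ast n}=\varphi\ast\varphi^{\ast(n-1)}$. Regular composition $g^{\odot}\varphi=\sum_n\varphi^{\ast n}a_n$ for $g=\sum q^na_n$; iterates $f^{\odot1}=f$, $f^{\odot(n+1)}=f^{\odot}(f^{\odot n})$. *)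

theory Defs
  imports "HOL-Analysis.Analysis"
begin

section \<open>Quaternions, modelled as real^4 (components 0,1,2,3 = 1,i,j,k)\<close>

type_synonym quat = "real ^ 4"

definition Quat :: "real \<Rightarrow> real \<Rightarrow> real \<Rightarrow> real \<Rightarrow> quat" where
  "Quat a b c d = (\<chi> i. if i = 0 then a else if i = 1 then b else if i = 2 then c else d)"

definition qmult :: "quat \<Rightarrow> quat \<Rightarrow> quat" (infixl "\<otimes>" 70) where
  "p \<otimes> q = Quat
     (p$0 * q$0 - p$1 * q$1 - p$2 * q$2 - p$3 * q$3)
     (p$0 * q$1 + p$1 * q$0 + p$2 * q$3 - p$3 * q$2)
     (p$0 * q$2 - p$1 * q$3 + p$2 * q$0 + p$3 * q$1)
     (p$0 * q$3 + p$1 * q$2 - p$2 * q$1 + p$3 * q$0)"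

definition qone :: quat where "qone = Quat 1 0 0 0"

definition qcnj :: "quat \<Rightarrow> quat" where
  "qcnj q = Quat (q$0) (- q$1) (- q$2) (- q$3)"

primrec qpow :: "quat \<Rightarrow> nat \<Rightarrow> quat" where
  "qpow q 0 = qone"
| "qpow q (Suc n) = q \<otimes> qpow q n"

definition Sph :: "quat set" where "Sph = {q. q \<otimes> q = - qone}"

definition slice :: "quat \<Rightarrow> quat set" where
  "slice I = {x *\<^sub>R qone + y *\<^sub>R I | x y. True}"

definition BB :: "quat set" where "BB = ball 0 1"

definition BB_slice :: "quat \<Rightarrow> quat set" where "BB_slice I = BB \<inter> slice I"

definition has_ps :: "(nat \<Rightarrow> quat) \<Rightarrow> (quat \<Rightarrow> quat) \<Rightarrow> bool" where
  "has_ps a f \<longleftrightarrow> (\<forall>q\<in>BB. (\<lambda>n. qpow q n \<otimes> a n) sums f q)"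

definition slice_regular :: "(quat \<Rightarrow> quat) \<Rightarrow> bool" where
  "slice_regular f \<longleftrightarrow> (\<exists>a. has_ps a f)"

definition coeffs :: "(quat \<Rightarrow> quat) \<Rightarrow> nat \<Rightarrow> quat" where
  "coeffs f = (SOME a. has_ps a f)"

definition ps :: "(nat \<Rightarrow> quat) \<Rightarrow> quat \<Rightarrow> quat" where
  "ps a q = (\<Sum>n. qpow q n \<otimes> a n)"

definition sprod :: "(quat \<Rightarrow> quat) \<Rightarrow> (quat \<Rightarrow> quat) \<Rightarrow> quat \<Rightarrow> quat" (infixl "\<star>" 70) where
  "f \<star> g = ps (\<lambda>n. \<Sum>k\<le>n. coeffs f k \<otimes> coeffs g (n - k))"

definition sinv :: "(quat \<Rightarrow> quat) \<Rightarrow> quat \<Rightarrow> quat" where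
  "sinv f = (SOME h. slice_regular h \<and> (\<forall>q\<in>BB. (f \<star> h) q = qone))"

primrec spow :: "(quat \<Rightarrow> quat) \<Rightarrow> nat \<Rightarrow> quat \<Rightarrow> quat" where
  "spow \<phi> 0 = (\<lambda>q. qone)"
| "spow \<phi> (Suc n) = \<phi> \<star> spow \<phi> n"

definition rcomp :: "(quat \<Rightarrow> quat) \<Rightarrow> (quat \<Rightarrow> quat) \<Rightarrow> quat \<Rightarrow> quat" where
  "rcomp g \<phi> = (\<lambda>q. \<Sum>n. spow \<phi> n q \<otimes> coeffs g n)"

text \<open>Regular iterates: riter f n = f^{\<odot>n} for n \<ge> 1 (riter f 0 = id is only a filler).\<close>
primrec riter :: "(quat \<Rightarrow> quat) \<Rightarrow> nat \<Rightarrow> quat \<Rightarrow> quat" where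
  "riter f 0 = (\<lambda>q. q)"
| "riter f (Suc n) = (if n = 0 then f else rcomp f (riter f n))"

end

theory Submission
  imports Defs "HOL-Complex_Analysis.Complex_Analysis"
begin

text \<open>A slice regular self-map \<open>f\<close> of \<open>\<bbbB>\<close> preserving \<open>\<bbbB>\<^sub>I\<close> has its power series
  coefficients in \<open>\<complex>\<^sub>I\<close>, so it is the slice regular extension of the holomorphic self-map \<open>F\<close>
  of the disc obtained by restricting \<open>f\<close> to \<open>\<bbbB>\<^sub>I \<cong> \<bbbD>\<close>. Regular composition, \<open>\<star>\<close>-products and
  \<open>\<star>\<close>-inverses of extensions are extensions of compositions, products and reciprocals, and by
  the representation formula the convergence of extensions is decided on the slice. Hence a
  subsequence \<open>F^(n k)\<close> of the iterates converges locally uniformly to a nonconstant map. By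
  Montel's theorem a subsequence of the gaps \<open>F^(n (k+1) - n k)\<close> tends to the identity, so \<open>F\<close>
  is an automorphism of the disc, i.e. a M\<ouml>bius transformation (Schwarz lemma), whose slice
  regular extension is the regular M\<ouml>bius transformation.\<close>

lemma Quat_nth [simp]:
  "Quat a b c d $ 0 = a" "Quat a b c d $ 1 = b" "Quat a b c d $ 2 = c" "Quat a b c d $ 3 = d"
  by (simp_all add: Quat_def)

lemma quat_eq_iff: "(p::quat) = q \<longleftrightarrow> p$0 = q$0 \<and> p$1 = q$1 \<and> p$2 = q$2 \<and> p$3 = q$3"
proof
  assume h: "p$0 = q$0 \<and> p$1 = q$1 \<and> p$2 = q$2 \<and> p$3 = q$3"
  have "p$i = q$i" for i
  proof -
    have "i = 0 \<or> i = 1 \<or> i = 2 \<or> i = 3" using exhaust_4[of i] by auto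
    then show ?thesis using h by (elim disjE) simp_all
  qed
  then show "p = q" by (simp add: vec_eq_iff)
qed simp

lemma sum_UNIV_4: "sum f (UNIV::4 set) = f 0 + f 1 + f 2 + f 3"
proof -
  have "(4::4) = 0" by simp
  then show ?thesis unfolding sum_4 by (simp only: ac_simps)
qed

lemma norm_quat_sq: "norm (q::quat) ^ 2 = q$0^2 + q$1^2 + q$2^2 + q$3^2"
  unfolding norm_vec_def L2_set_def sum_UNIV_4 by (simp add: sum_nonneg)

lemma inner_quat: "inner (p::quat) q = p$0*q$0 + p$1*q$1 + p$2*q$2 + p$3*q$3"
  by (simp add: inner_vec_def sum_UNIV_4)

lemma qmult_nth [simp]:
  "(p \<otimes> q)$0 = p$0 * q$0 - p$1 * q$1 - p$2 * q$2 - p$3 * q$3"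
  "(p \<otimes> q)$1 = p$0 * q$1 + p$1 * q$0 + p$2 * q$3 - p$3 * q$2"
  "(p \<otimes> q)$2 = p$0 * q$2 - p$1 * q$3 + p$2 * q$0 + p$3 * q$1"
  "(p \<otimes> q)$3 = p$0 * q$3 + p$1 * q$2 - p$2 * q$1 + p$3 * q$0"
  by (simp_all add: qmult_def)

lemma qone_nth [simp]: "qone$0 = 1" "qone$1 = 0" "qone$2 = 0" "qone$3 = 0"
  by (simp_all add: qone_def)

lemma qcnj_nth [simp]: "qcnj q$0 = q$0" "qcnj q$1 = - q$1" "qcnj q$2 = - q$2" "qcnj q$3 = - q$3"
  by (simp_all add: qcnj_def)

lemma qmult_add_left: "(p + p') \<otimes> q = p \<otimes> q + p' \<otimes> q"
  and qmult_add_right: "q \<otimes> (p + p') = q \<otimes> p + q \<otimes> p'"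
  and qmult_diff_left: "(p - p') \<otimes> q = p \<otimes> q - p' \<otimes> q"
  and qmult_diff_right: "q \<otimes> (p - p') = q \<otimes> p - q \<otimes> p'"
  and qmult_minus_left: "(- p) \<otimes> q = - (p \<otimes> q)"
  and qmult_minus_right: "q \<otimes> (- p) = - (q \<otimes> p)"
  and qmult_scaleR_left: "(r *\<^sub>R p) \<otimes> q = r *\<^sub>R (p \<otimes> q)"
  and qmult_scaleR_right: "q \<otimes> (r *\<^sub>R p) = r *\<^sub>R (q \<otimes> p)"
  and qmult_assoc: "(p \<otimes> q) \<otimes> s = p \<otimes> (q \<otimes> s)"
  by (simp_all add: quat_eq_iff algebra_simps)

lemma qmult_zero_left [simp]: "0 \<otimes> q = 0"
  and qmult_zero_right [simp]: "q \<otimes> 0 = 0"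
  and qone_left [simp]: "qone \<otimes> q = q"
  and qone_right [simp]: "q \<otimes> qone = q"
  by (simp_all add: quat_eq_iff)

lemma norm_qmult: "norm (p \<otimes> q) = norm p * norm q"
proof -
  have "norm (p \<otimes> q) ^ 2 = (norm p * norm q) ^ 2"
    unfolding power_mult_distrib norm_quat_sq by (simp add: algebra_simps power2_eq_square)
  then show ?thesis by (simp add: power2_eq_iff_nonneg)
qed

lemma norm_qone [simp]: "norm qone = 1"
  using norm_quat_sq[of qone] norm_ge_zero[of qone] by (auto simp: power2_eq_1_iff)

lemma norm_qpow: "norm (qpow q n) = norm q ^ n"
  by (induction n) (simp_all add: norm_qmult)

lemma qpow_scaleR_qone: "qpow (x *\<^sub>R qone) n = x ^ n *\<^sub>R qone"
  by (induction n) (simp_all add: qmult_scaleR_left)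

lemma qmult_left_cancel:
  assumes "p \<otimes> q = p \<otimes> q'" "p \<noteq> 0"
  shows "q = q'"
proof -
  have "p \<otimes> (q - q') = 0"
    using assms(1) by (simp add: quat_eq_iff algebra_simps)
  then show ?thesis
    using norm_qmult[of p "q - q'"] assms(2) by simp
qed

lemma bounded_linear_qmult_right: "bounded_linear (\<lambda>x. c \<otimes> x)"
  by (rule bounded_linear_intro[of _ "norm c"])
     (auto simp: qmult_add_right qmult_scaleR_right norm_qmult ac_simps)

section \<open>Slices as copies of the complex plane\<close>

definition slice_emb :: "quat \<Rightarrow> complex \<Rightarrow> quat" where
  "slice_emb J z = Re z *\<^sub>R qone + Im z *\<^sub>R J"

definition slice_coord :: "quat \<Rightarrow> quat \<Rightarrow> complex" where
  "slice_coord J q = Complex (q$0) (inner q J)"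

lemma Sph_iff: "J \<in> Sph \<longleftrightarrow> J$0 = 0 \<and> J$1^2 + J$2^2 + J$3^2 = 1"
proof
  assume "J \<in> Sph"
  then have e0: "J$0*J$0 - J$1*J$1 - J$2*J$2 - J$3*J$3 = -1"
    and e: "J$0*J$1 = 0" "J$0*J$2 = 0" "J$0*J$3 = 0"
    by (auto simp: Sph_def quat_eq_iff algebra_simps)
  have "J$0 = 0"
  proof (rule ccontr)
    assume "J$0 \<noteq> 0"
    with e e0 have "J$0*J$0 = -1" by simp
    moreover have "J$0*J$0 \<ge> 0" by simp
    ultimately show False by linarith
  qed
  with e0 show "J$0 = 0 \<and> J$1^2 + J$2^2 + J$3^2 = 1" by (simp add: power2_eq_square)
next
  assume h: "J$0 = 0 \<and> J$1^2 + J$2^2 + J$3^2 = 1"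
  then have "J$1*J$1 + J$2*J$2 + J$3*J$3 = 1" by (simp add: power2_eq_square)
  with h show "J \<in> Sph" by (simp add: Sph_def quat_eq_iff algebra_simps)
qed

lemma slice_emb_nth [simp]: "slice_emb J z $ i = Re z * qone$i + Im z * J$i"
  by (simp add: slice_emb_def)

lemma slice_emb_add: "slice_emb J (z + w) = slice_emb J z + slice_emb J w"
  and slice_emb_minus: "slice_emb J (- z) = - slice_emb J z"
  and slice_emb_zero [simp]: "slice_emb J 0 = 0"
  and slice_emb_one [simp]: "slice_emb J 1 = qone"
  and slice_emb_of_real: "slice_emb J (of_real r) = r *\<^sub>R qone"
  by (simp_all add: slice_emb_def algebra_simps)

lemma slice_emb_sum: "slice_emb J (sum g S) = (\<Sum>x\<in>S. slice_emb J (g x))"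
  by (induction S rule: infinite_finite_induct) (auto simp: slice_emb_add)

lemma bounded_linear_slice_emb: "bounded_linear (slice_emb J)"
  unfolding slice_emb_def[abs_def]
  by (intro bounded_linear_add bounded_linear_compose[OF bounded_linear_scaleR_left]
      bounded_linear_Re bounded_linear_Im)

lemma bounded_linear_slice_coord: "bounded_linear (slice_coord J)"
  unfolding slice_coord_def[abs_def] Complex_eq
  by (intro bounded_linear_add bounded_linear_compose[OF bounded_linear_of_real]
      bounded_linear_compose[OF bounded_linear_mult_right] bounded_linear_vec_nth
      bounded_linear_inner_left)

context
  fixes J :: quat
  assumes J: "J \<in> Sph"
begin

lemma Sph_re: "J$0 = 0" and Sph_im_sq: "J$1^2 + J$2^2 + J$3^2 = 1"
  using J by (simp_all add: Sph_iff)

lemma slice_emb_mult: "slice_emb J (z * w) = slice_emb J z \<otimes> slice_emb J w"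
proof -
  have "slice_emb J z \<otimes> slice_emb J w = (Re z * Re w) *\<^sub>R qone + (Re z * Im w) *\<^sub>R J
      + (Im z * Re w) *\<^sub>R J + (Im z * Im w) *\<^sub>R (J \<otimes> J)"
    unfolding slice_emb_def
    by (simp add: qmult_add_left qmult_add_right qmult_scaleR_left qmult_scaleR_right algebra_simps)
  also have "\<dots> = slice_emb J (z * w)"
    using J by (simp add: Sph_def slice_emb_def algebra_simps)
  finally show ?thesis by simp
qed

lemma norm_slice_emb [simp]: "norm (slice_emb J z) = norm z"
proof -
  have "norm (slice_emb J z) ^ 2 = Re z ^ 2 + Im z ^ 2 * (J$1^2 + J$2^2 + J$3^2)"
    by (simp add: norm_quat_sq Sph_re power_mult_distrib algebra_simps)
  also have "\<dots> = norm z ^ 2"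
    by (simp add: Sph_im_sq cmod_power2)
  finally show ?thesis by (simp add: power2_eq_iff_nonneg)
qed

lemma slice_coord_emb [simp]: "slice_coord J (slice_emb J z) = z"
proof -
  have "inner (slice_emb J z) J = Im z * (J$1^2 + J$2^2 + J$3^2)"
    by (simp add: inner_quat Sph_re power2_eq_square algebra_simps)
  then show ?thesis
    by (simp add: slice_coord_def Sph_re Sph_im_sq complex_eq_iff)
qed

lemma qcnj_slice_emb: "qcnj (slice_emb J z) = slice_emb J (cnj z)"
  by (simp add: quat_eq_iff Sph_re)

lemma qpow_slice_emb: "qpow (slice_emb J z) n = slice_emb J (z ^ n)"
  by (induction n) (simp_all add: slice_emb_mult)

lemma slice_eq_range: "slice J = range (slice_emb J)"
  unfolding slice_def slice_emb_def
proof safe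
  fix x y :: real
  show "x *\<^sub>R qone + y *\<^sub>R J \<in> range (\<lambda>z. Re z *\<^sub>R qone + Im z *\<^sub>R J)"
    by (rule range_eqI[of _ _ "Complex x y"]) simp
qed auto

lemma slice_emb_coord: "q \<in> slice J \<Longrightarrow> slice_emb J (slice_coord J q) = q"
  unfolding slice_eq_range by auto

lemma slice_emb_in_BB_iff: "slice_emb J z \<in> BB \<longleftrightarrow> norm z < 1"
  by (simp add: BB_def)

end

lemma exists_slice_emb: "\<exists>J z. J \<in> Sph \<and> q = slice_emb J z"
proof (cases "q$1^2 + q$2^2 + q$3^2 = 0")
  case True
  then have "q = slice_emb (Quat 0 1 0 0) (of_real (q$0))"
    by (simp add: quat_eq_iff add_nonneg_eq_0_iff)
  moreover have "Quat 0 1 0 0 \<in> Sph" by (simp add: Sph_iff)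
  ultimately show ?thesis by blast
next
  case False
  define s where "s = sqrt (q$1^2 + q$2^2 + q$3^2)"
  have "0 < q$1^2 + q$2^2 + q$3^2"
    using False by (metis add_nonneg_nonneg zero_le_power2 order_less_le)
  then have s: "s > 0" "s^2 = q$1^2 + q$2^2 + q$3^2" by (simp_all add: s_def)
  define J where "J = Quat 0 (q$1/s) (q$2/s) (q$3/s)"
  have "J \<in> Sph"
    unfolding Sph_iff J_def using s False by (simp add: power_divide add_divide_distrib[symmetric])
  moreover have "q = slice_emb J (Complex (q$0) s)"
    using s by (simp add: quat_eq_iff J_def)
  ultimately show ?thesis by blast
qed

lemma BB_slice_embE:
  assumes "q \<in> BB"
  obtains J z where "J \<in> Sph" "q = slice_emb J z" "norm z < 1"
  using exists_slice_emb[of q] assms slice_emb_in_BB_iff by metis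

text \<open>The coefficients of the representation formula
  \<open>f (x + J y) = \<onehalf>(1 - J I) f (x + I y) + \<onehalf>(1 + J I) f (x - I y)\<close>.\<close>

definition repr_left :: "quat \<Rightarrow> quat \<Rightarrow> quat" where
  "repr_left J I = (1/2) *\<^sub>R (qone - J \<otimes> I)"

definition repr_right :: "quat \<Rightarrow> quat \<Rightarrow> quat" where
  "repr_right J I = (1/2) *\<^sub>R (qone + J \<otimes> I)"

lemma repr_left_add_right: "repr_left J I + repr_right J I = qone"
  by (simp add: repr_left_def repr_right_def quat_eq_iff field_simps)

lemma repr_left_diff_right: "repr_left J I - repr_right J I = - (J \<otimes> I)"
  by (simp add: repr_left_def repr_right_def quat_eq_iff field_simps)

lemma repr_left_same: "I \<in> Sph \<Longrightarrow> repr_left I I = qone"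
  and repr_right_same: "I \<in> Sph \<Longrightarrow> repr_right I I = 0"
  by (simp_all add: repr_left_def repr_right_def Sph_def quat_eq_iff)

lemma repr_combination:
  "repr_left J I \<otimes> p + repr_right J I \<otimes> p = p"
  by (simp add: qmult_add_left[symmetric] repr_left_add_right)

lemma slice_emb_repr:
  assumes I: "I \<in> Sph"
  shows "slice_emb J z = repr_left J I \<otimes> slice_emb I z + repr_right J I \<otimes> slice_emb I (cnj z)"
proof -
  have "repr_left J I \<otimes> slice_emb I z + repr_right J I \<otimes> slice_emb I (cnj z)
     = Re z *\<^sub>R (repr_left J I + repr_right J I)
       + Im z *\<^sub>R ((repr_left J I - repr_right J I) \<otimes> I)"
    by (simp add: slice_emb_def qmult_add_right qmult_diff_right qmult_scaleR_right
        qmult_diff_left algebra_simps)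
  also have "(repr_left J I - repr_right J I) \<otimes> I = J"
    using I by (simp add: repr_left_diff_right qmult_minus_left qmult_assoc Sph_def qmult_minus_right)
  finally show ?thesis by (simp add: repr_left_add_right slice_emb_def)
qed

lemma qpow_slice_emb_qmult:
  assumes I: "I \<in> Sph" and J: "J \<in> Sph"
  shows "qpow (slice_emb J z) n \<otimes> slice_emb I c
       = repr_left J I \<otimes> slice_emb I (z^n * c) + repr_right J I \<otimes> slice_emb I (cnj z ^ n * c)"
  unfolding qpow_slice_emb[OF J] slice_emb_repr[OF I, of J "z^n"]
  by (simp only: qmult_add_left qmult_assoc slice_emb_mult[OF I] complex_cnj_power)

lemma real_powser_zero_coeff0:
  fixes e :: "nat \<Rightarrow> real"
  assumes "\<And>x. x \<noteq> 0 \<Longrightarrow> \<bar>x\<bar> < 1 \<Longrightarrow> (\<lambda>n. e n * x^n) sums 0"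
  shows "e 0 = 0"
proof -
  have "((\<lambda>x. 0) \<longlongrightarrow> e 0) (at (0::real))"
    by (rule powser_limit_0_strong[where s=1]) (use assms in auto)
  then show ?thesis by (simp add: tendsto_const_iff)
qed

lemma real_powser_zero_coeffs:
  fixes e :: "nat \<Rightarrow> real"
  assumes "\<And>x. x \<noteq> 0 \<Longrightarrow> \<bar>x\<bar> < 1 \<Longrightarrow> (\<lambda>n. e n * x^n) sums 0"
  shows "e n = 0"
  using assms
proof (induction n arbitrary: e)
  case 0
  then show ?case by (rule real_powser_zero_coeff0)
next
  case (Suc n)
  have e0: "e 0 = 0" by (rule real_powser_zero_coeff0) (use Suc.prems in auto)
  have "(\<lambda>k. e (Suc k) * x^k) sums 0" if "x \<noteq> 0" "\<bar>x\<bar> < 1" for x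
  proof -
    have "(\<lambda>k. e (Suc k) * x^Suc k) sums 0"
      using Suc.prems[OF that] e0 by (subst sums_Suc_iff) simp
    from sums_divide[OF this, of x] show ?thesis
      using that(1) by (simp add: field_simps)
  qed
  then show ?case by (rule Suc.IH)
qed

lemma quat_powser_zero_coeffs:
  fixes e :: "nat \<Rightarrow> quat"
  assumes "\<And>x. \<bar>x\<bar> < 1 \<Longrightarrow> (\<lambda>n. x^n *\<^sub>R e n) sums 0"
  shows "e n = 0"
proof -
  have "e n $ i = 0" for i
  proof (rule real_powser_zero_coeffs)
    fix x :: real assume "\<bar>x\<bar> < 1"
    from bounded_linear.sums[OF bounded_linear_vec_nth[of i] assms[OF this]]
    show "(\<lambda>n. e n $ i * x ^ n) sums 0" by (simp add: mult.commute)
  qed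
  then show ?thesis by (simp add: vec_eq_iff)
qed

lemma has_ps_real_axis:
  assumes "has_ps a f" "\<bar>x\<bar> < 1"
  shows "(\<lambda>n. x^n *\<^sub>R a n) sums f (x *\<^sub>R qone)"
proof -
  have "x *\<^sub>R qone \<in> BB" using assms(2) by (simp add: BB_def)
  then have "(\<lambda>n. qpow (x *\<^sub>R qone) n \<otimes> a n) sums f (x *\<^sub>R qone)"
    using assms(1) by (simp add: has_ps_def)
  then show ?thesis by (simp add: qpow_scaleR_qone qmult_scaleR_left)
qed

lemma has_ps_unique:
  assumes "has_ps a f" "has_ps b f"
  shows "a = b"
proof
  fix n
  have "a n - b n = 0"
  proof (rule quat_powser_zero_coeffs)
    fix x :: real assume "\<bar>x\<bar> < 1"
    from sums_diff[OF has_ps_real_axis[OF assms(1) this] has_ps_real_axis[OF assms(2) this]]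
    show "(\<lambda>n. x^n *\<^sub>R (a n - b n)) sums 0" by (simp add: scaleR_diff_right)
  qed
  then show "a n = b n" by simp
qed

lemma coeffs_eq: "has_ps a f \<Longrightarrow> coeffs f = a"
  unfolding coeffs_def by (rule some_equality) (auto intro: has_ps_unique)

lemma has_ps_cong: "has_ps a f \<Longrightarrow> (\<And>q. q \<in> BB \<Longrightarrow> f q = g q) \<Longrightarrow> has_ps a g"
  by (simp add: has_ps_def)

lemma has_ps_coeffs: "slice_regular f \<Longrightarrow> has_ps (coeffs f) f"
  unfolding slice_regular_def coeffs_def by (metis someI_ex)

lemma has_ps_abs_summable:
  assumes "has_ps a f" "norm q < 1"
  shows "summable (\<lambda>n. norm q ^ n * norm (a n))"
proof -
  define r where "r = (norm q + 1) / 2"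
  have r: "norm q < r" "r < 1" "0 < r"
    using assms(2) unfolding r_def by (simp_all add: add_nonneg_pos)
  have "(\<lambda>n. r^n *\<^sub>R a n) \<longlonglongrightarrow> 0"
    using has_ps_real_axis[OF assms(1), of r] r by (simp add: summable_LIMSEQ_zero sums_summable)
  then have "Bseq (\<lambda>n. r^n *\<^sub>R a n)" using convergent_imp_Bseq convergentI by blast
  then obtain M where M: "M > 0" "\<And>n. norm (r^n *\<^sub>R a n) \<le> M" by (auto elim: BseqE)
  show ?thesis
  proof (rule summable_comparison_test[OF _ summable_mult[OF summable_geometric]], intro exI allI impI)
    fix n :: nat
    have "norm q ^ n * norm (a n) = (norm q / r)^n * norm (r^n *\<^sub>R a n)"
      using r by (simp add: power_divide)
    also have "\<dots> \<le> (norm q / r)^n * M"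
      using M(2) r by (intro mult_left_mono) simp_all
    finally show "norm (norm q ^ n * norm (a n)) \<le> M * (norm q / r) ^ n"
      by (simp add: mult.commute)
  qed (use r in simp)
qed

lemma has_ps_sprod:
  assumes f: "slice_regular f" and g: "slice_regular g"
  shows "has_ps (\<lambda>n. \<Sum>k\<le>n. coeffs f k \<otimes> coeffs g (n - k)) (f \<star> g)"
  unfolding has_ps_def
proof
  fix q assume "q \<in> BB"
  then have q: "norm q < 1" by (simp add: BB_def)
  define A where "A k = norm q ^ k * norm (coeffs f k)" for k
  define B where "B k = norm q ^ k * norm (coeffs g k)" for k
  have "summable (\<lambda>n. \<Sum>k\<le>n. A k * B (n - k))"
    using has_ps_abs_summable[OF has_ps_coeffs[OF f] q] has_ps_abs_summable[OF has_ps_coeffs[OF g] q]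
    by (intro summable_Cauchy_product) (simp_all add: A_def B_def)
  then have "summable (\<lambda>n. qpow q n \<otimes> (\<Sum>k\<le>n. coeffs f k \<otimes> coeffs g (n - k)))"
  proof (rule summable_comparison_test[rotated], intro exI allI impI)
    fix n :: nat
    have "norm (qpow q n \<otimes> (\<Sum>k\<le>n. coeffs f k \<otimes> coeffs g (n - k)))
        \<le> norm q ^ n * (\<Sum>k\<le>n. norm (coeffs f k) * norm (coeffs g (n - k)))"
      unfolding norm_qmult norm_qpow
      by (intro mult_left_mono order_trans[OF norm_sum]) (simp_all add: norm_qmult)
    also have "\<dots> = (\<Sum>k\<le>n. A k * B (n - k))"
      unfolding sum_distrib_left A_def B_def
      by (intro sum.cong refl) (simp add: power_add[symmetric] mult_ac)
    finally show "norm (qpow q n \<otimes> (\<Sum>k\<le>n. coeffs f k \<otimes> coeffs g (n - k)))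
        \<le> (\<Sum>k\<le>n. A k * B (n - k))" .
  qed
  then show "(\<lambda>n. qpow q n \<otimes> (\<Sum>k\<le>n. coeffs f k \<otimes> coeffs g (n - k))) sums (f \<star> g) q"
    unfolding sprod_def ps_def by (rule summable_sums)
qed

lemma convolution_cancel_left:
  fixes d c e :: "nat \<Rightarrow> quat"
  assumes d0: "d 0 \<noteq> 0"
    and eq: "\<And>n. (\<Sum>k\<le>n. d k \<otimes> c (n - k)) = (\<Sum>k\<le>n. d k \<otimes> e (n - k))"
  shows "c n = e n"
proof (induction n rule: less_induct)
  case (less n)
  show ?case
  proof (cases n)
    case 0
    have "d 0 \<otimes> c 0 = d 0 \<otimes> e 0" using eq[of 0] by simp
    then show ?thesis using d0 0 by (auto intro: qmult_left_cancel)
  next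
    case (Suc m)
    have "(\<Sum>i\<le>m. d (Suc i) \<otimes> c (m - i)) = (\<Sum>i\<le>m. d (Suc i) \<otimes> e (m - i))"
      using less Suc by (intro sum.cong) auto
    with eq[of "Suc m"] have "d 0 \<otimes> c (Suc m) = d 0 \<otimes> e (Suc m)"
      unfolding sum.atMost_Suc_shift by simp
    then show ?thesis using d0 Suc by (auto intro: qmult_left_cancel)
  qed
qed

definition taylor_coeff :: "(complex \<Rightarrow> complex) \<Rightarrow> nat \<Rightarrow> complex" where
  "taylor_coeff G n = (deriv ^^ n) G 0 / fact n"

lemma taylor_coeff_unique:
  assumes "\<And>w. norm w < 1 \<Longrightarrow> (\<lambda>n. c n * w^n) sums G w"
  shows "taylor_coeff G n = c n"
proof -
  have "eventually (\<lambda>u. (\<lambda>n. fps_nth (Abs_fps c) n * u ^ n) sums G u) (nhds 0)"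
    by (rule eventually_nhds_in_open[of "ball 0 1", THEN eventually_mono]) (use assms in auto)
  then have "G has_fps_expansion Abs_fps c" by (rule has_fps_expansionI)
  from fps_nth_fps_expansion[OF this, of n] show ?thesis by (simp add: taylor_coeff_def)
qed

lemma taylor_coeff_sums:
  assumes "G holomorphic_on ball 0 1" "norm w < 1"
  shows "(\<lambda>n. w^n * taylor_coeff G n) sums G w"
  using holomorphic_power_series[OF assms(1), of w] assms(2)
  by (simp add: taylor_coeff_def mult.commute)

lemma taylor_coeff_cong:
  assumes "\<And>w. norm w < 1 \<Longrightarrow> G w = H w"
  shows "taylor_coeff G = taylor_coeff H"
proof
  fix n
  have "eventually (\<lambda>w. G w = H w) (nhds 0)"
    by (rule eventually_nhds_in_open[of "ball 0 1", THEN eventually_mono]) (auto simp: assms)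
  then show "taylor_coeff G n = taylor_coeff H n"
    unfolding taylor_coeff_def by (metis higher_deriv_cong_ev)
qed

lemma taylor_coeff_0: "taylor_coeff G 0 = G 0"
  by (simp add: taylor_coeff_def)

lemma taylor_coeff_mult:
  assumes "G holomorphic_on ball 0 1" "H holomorphic_on ball 0 1"
  shows "taylor_coeff (\<lambda>w. G w * H w) n = (\<Sum>k\<le>n. taylor_coeff G k * taylor_coeff H (n - k))"
proof -
  have "(deriv ^^ n) (\<lambda>w. G w * H w) 0 =
        (\<Sum>i=0..n. of_nat (n choose i) * (deriv ^^ i) G 0 * (deriv ^^ (n-i)) H 0)"
    by (rule higher_deriv_mult[OF assms]) auto
  then have "taylor_coeff (\<lambda>w. G w * H w) n
      = (\<Sum>i\<le>n. of_nat (n choose i) * (deriv ^^ i) G 0 * (deriv ^^ (n-i)) H 0 / fact n)"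
    by (simp add: taylor_coeff_def sum_divide_distrib atLeast0AtMost)
  also have "\<dots> = (\<Sum>k\<le>n. taylor_coeff G k * taylor_coeff H (n - k))"
  proof (rule sum.cong[OF refl])
    fix i assume "i \<in> {..n}"
    then have "(of_nat (n choose i) :: complex) = fact n / (fact i * fact (n - i))"
      by (simp add: binomial_fact)
    then show "of_nat (n choose i) * (deriv ^^ i) G 0 * (deriv ^^ (n-i)) H 0 / fact n
        = taylor_coeff G i * taylor_coeff H (n - i)"
      by (simp add: taylor_coeff_def field_simps)
  qed
  finally show ?thesis .
qed

lemma holomorphic_on_compose_disc:
  assumes "F holomorphic_on ball 0 1" "G holomorphic_on ball 0 1"
    and "\<And>w. norm w < 1 \<Longrightarrow> norm (G w) < 1"
  shows "(\<lambda>w. F (G w)) holomorphic_on ball 0 1"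
proof -
  have "G ` ball 0 1 \<subseteq> ball 0 1" using assms(3) by auto
  from holomorphic_on_compose_gen[OF assms(2,1) this] show ?thesis by (simp add: o_def)
qed

lemma funpow_holomorphic_self_map:
  assumes F: "F holomorphic_on ball 0 1" and F_disc: "\<And>w. norm w < 1 \<Longrightarrow> norm (F w) < 1"
  shows "(F ^^ n) holomorphic_on ball 0 1 \<and> (\<forall>w. norm w < 1 \<longrightarrow> norm ((F ^^ n) w) < 1)"
proof (induction n)
  case 0
  then show ?case by (simp add: holomorphic_on_ident id_def)
next
  case (Suc n)
  then show ?case
    using holomorphic_on_compose_disc[OF F, of "F ^^ n"] F_disc by simp
qed

section \<open>Iteration of holomorphic self-maps of the disc\<close>

lemma cball_half_gap_subset_disc:
  fixes y :: complex
  assumes "norm y < 1"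
  shows "cball y ((1 - norm y) / 2) \<subseteq> ball 0 1"
proof (rule subsetI)
  fix x assume "x \<in> cball y ((1 - norm y) / 2)"
  then have "norm (x - y) \<le> (1 - norm y) / 2" by (simp add: dist_norm norm_minus_commute)
  moreover have "norm x \<le> norm y + norm (x - y)" using norm_triangle_ineq[of y "x - y"] by simp
  ultimately show "x \<in> ball 0 1" using assms by simp
qed

lemma holomorphic_on_disc_locally_uniform_limit:
  assumes hol: "\<And>k. Fs k holomorphic_on ball 0 1"
    and ul: "\<And>K. compact K \<Longrightarrow> K \<subseteq> ball 0 1 \<Longrightarrow> uniform_limit K Fs G sequentially"
  shows "G holomorphic_on ball 0 1"
proof (rule holomorphic_uniform_sequence[OF open_ball hol])
  fix y :: complex assume "y \<in> ball 0 1"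
  then have "0 < (1 - norm y) / 2" "cball y ((1 - norm y) / 2) \<subseteq> ball 0 1"
    using cball_half_gap_subset_disc by auto
  then show "\<exists>d>0. cball y d \<subseteq> ball 0 1 \<and> uniform_limit (cball y d) Fs G sequentially"
    using ul[OF compact_cball] by blast
qed

lemma Montel_disc_self_maps:
  fixes Fs :: "nat \<Rightarrow> complex \<Rightarrow> complex"
  assumes hol: "\<And>k. Fs k holomorphic_on ball 0 1"
    and disc: "\<And>k w. norm w < 1 \<Longrightarrow> norm (Fs k w) < 1"
  obtains G r where "G holomorphic_on ball 0 1" "strict_mono r"
    "\<And>w. norm w < 1 \<Longrightarrow> (\<lambda>j. Fs (r j) w) \<longlonglongrightarrow> G w"
    "\<And>K. compact K \<Longrightarrow> K \<subseteq> ball 0 1 \<Longrightarrow> uniform_limit K (Fs \<circ> r) G sequentially"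
proof -
  have bound: "\<exists>B. \<forall>h\<in>range Fs. \<forall>z\<in>K. norm (h z) \<le> B" if "K \<subseteq> ball 0 1" for K
    using that disc by (intro exI[of _ 1]) (auto simp: subset_iff intro: less_imp_le)
  obtain G r where "G holomorphic_on ball 0 1" "strict_mono r"
    "\<And>w. w \<in> ball 0 1 \<Longrightarrow> (\<lambda>j. Fs (r j) w) \<longlonglongrightarrow> G w"
    "\<And>K. compact K \<Longrightarrow> K \<subseteq> ball 0 1 \<Longrightarrow> uniform_limit K (Fs \<circ> r) G sequentially"
    using Montel[OF open_ball, where \<H>="range Fs" and \<F>=Fs] hol bound by blast
  then show ?thesis using that by simp
qed

lemma nonconstant_limit_of_disc_self_maps:
  assumes G: "G holomorphic_on ball 0 1"
    and lim: "\<And>w. norm w < 1 \<Longrightarrow> (\<lambda>k. Fs k w) \<longlonglongrightarrow> G w"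
    and disc: "\<And>k w. norm w < 1 \<Longrightarrow> norm (Fs k w) < 1"
    and nc: "\<exists>p\<in>ball 0 1. \<exists>q\<in>ball 0 1. G p \<noteq> G q"
  shows "G ` ball 0 1 \<subseteq> ball 0 1" and "open (G ` ball 0 1)"
proof -
  have "\<not> G constant_on ball 0 1" using nc unfolding constant_on_def by metis
  then show op: "open (G ` ball 0 1)"
    by (intro open_mapping_thm[OF G]) auto
  have "norm (G w) \<le> 1" if "norm w < 1" for w
  proof (rule tendsto_upperbound[OF tendsto_norm[OF lim[OF that]]])
    show "\<forall>\<^sub>F k in sequentially. norm (Fs k w) \<le> 1"
      using disc[OF that] by (simp add: less_imp_le)
  qed simp
  then have "G ` ball 0 1 \<subseteq> cball 0 1" by auto
  then have "G ` ball 0 1 \<subseteq> interior (cball 0 1)" using op interior_maximal by blast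
  then show "G ` ball 0 1 \<subseteq> ball 0 1" by simp
qed

lemma uniform_limit_tendsto_compose:
  fixes Fs :: "nat \<Rightarrow> 'a::metric_space \<Rightarrow> 'b::metric_space"
  assumes ul: "uniform_limit (cball y e) Fs G sequentially"
    and G: "continuous_on (cball y e) G" and e: "e > 0" and x: "x \<longlonglongrightarrow> y"
  shows "(\<lambda>k. Fs k (x k)) \<longlonglongrightarrow> G y"
proof (rule tendstoI)
  fix \<epsilon> :: real assume \<epsilon>: "\<epsilon> > 0"
  have "y \<in> cball y e" using e by simp
  then obtain \<delta> where \<delta>: "\<delta> > 0" "\<And>z. z \<in> cball y e \<Longrightarrow> dist z y < \<delta> \<Longrightarrow> dist (G z) (G y) < \<epsilon>/2"
    using G \<epsilon> unfolding continuous_on_iff by (metis half_gt_zero)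
  have "\<forall>\<^sub>F k in sequentially. \<forall>z\<in>cball y e. dist (Fs k z) (G z) < \<epsilon>/2"
    using uniform_limitD[OF ul, of "\<epsilon>/2"] \<epsilon> by simp
  moreover have "\<forall>\<^sub>F k in sequentially. dist (x k) y < min \<delta> e"
    using tendstoD[OF x, of "min \<delta> e"] \<delta>(1) e by simp
  ultimately show "\<forall>\<^sub>F k in sequentially. dist (Fs k (x k)) (G y) < \<epsilon>"
  proof eventually_elim
    case (elim k)
    then have xk: "x k \<in> cball y e" by (simp add: dist_commute)
    have "dist (Fs k (x k)) (G y) \<le> dist (Fs k (x k)) (G (x k)) + dist (G (x k)) (G y)"
      by (rule dist_triangle)
    also have "\<dots> < \<epsilon>/2 + \<epsilon>/2" using elim xk \<delta>(2)[OF xk] by (intro add_strict_mono) auto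
    finally show ?case by simp
  qed
qed

lemma uniform_limit_tendsto_compose_disc:
  assumes ul: "\<And>K. compact K \<Longrightarrow> K \<subseteq> ball 0 1 \<Longrightarrow> uniform_limit K Fs H sequentially"
    and H: "H holomorphic_on ball 0 1" and x: "x \<longlonglongrightarrow> y" and y: "norm y < 1"
  shows "(\<lambda>k. Fs k (x k)) \<longlonglongrightarrow> H y"
proof (rule uniform_limit_tendsto_compose[OF _ _ _ x])
  have sub: "cball y ((1 - norm y) / 2) \<subseteq> ball 0 1"
    by (rule cball_half_gap_subset_disc[OF y])
  then show "uniform_limit (cball y ((1 - norm y) / 2)) Fs H sequentially"
    by (intro ul) auto
  show "continuous_on (cball y ((1 - norm y) / 2)) H"
    using holomorphic_on_imp_continuous_on[OF H] sub by (rule continuous_on_subset)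
qed (use y in simp)

text \<open>A locally uniform limit of gaps \<open>F^(n (k+1) - n k)\<close> fixes the open set \<open>G(\<bbbD>)\<close>,
  hence is the identity.\<close>

lemma iterates_tend_to_identity:
  assumes F: "F holomorphic_on ball 0 1" and F_disc: "\<And>w. norm w < 1 \<Longrightarrow> norm (F w) < 1"
    and n: "strict_mono n"
    and lim: "\<And>w. norm w < 1 \<Longrightarrow> (\<lambda>k. (F ^^ n k) w) \<longlonglongrightarrow> G w"
    and G: "G holomorphic_on ball 0 1" and nc: "\<exists>p\<in>ball 0 1. \<exists>q\<in>ball 0 1. G p \<noteq> G q"
  obtains m where "\<And>j. 0 < m j" "\<And>w. norm w < 1 \<Longrightarrow> (\<lambda>j. (F ^^ m j) w) \<longlonglongrightarrow> w"
proof -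
  note iter = funpow_holomorphic_self_map[OF F F_disc]
  define gap where "gap k = F ^^ (n (Suc k) - n k)" for k
  have gap_step: "gap k ((F ^^ n k) w) = (F ^^ n (Suc k)) w" for k w
  proof -
    have "n (Suc k) = (n (Suc k) - n k) + n k"
      using strict_monoD[OF n, of k "Suc k"] by simp
    then show ?thesis unfolding gap_def by (metis funpow_add o_apply)
  qed
  have gap: "gap k holomorphic_on ball 0 1" "norm w < 1 \<Longrightarrow> norm (gap k w) < 1" for k w
    using iter unfolding gap_def by blast+
  obtain H r where H: "H holomorphic_on ball 0 1" and r: "strict_mono r"
    and H_lim: "\<And>w. norm w < 1 \<Longrightarrow> (\<lambda>j. gap (r j) w) \<longlonglongrightarrow> H w"
    and H_ul: "\<And>K. compact K \<Longrightarrow> K \<subseteq> ball 0 1 \<Longrightarrow> uniform_limit K (gap \<circ> r) H sequentially"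
    using Montel_disc_self_maps[of gap, OF gap] by blast
  have G_disc: "G ` ball 0 1 \<subseteq> ball 0 1" "open (G ` ball 0 1)"
    using iter by (intro nonconstant_limit_of_disc_self_maps[OF G lim _ nc]; blast)+
  have H_fix: "H (G w) = G w" if w: "norm w < 1" for w
  proof -
    have Gw: "norm (G w) < 1" using G_disc(1) w by (meson image_subset_iff mem_ball_0)
    have "(\<lambda>j. (F ^^ n (r j)) w) \<longlonglongrightarrow> G w"
      using LIMSEQ_subseq_LIMSEQ[OF lim[OF w] r] by (simp add: o_def)
    from uniform_limit_tendsto_compose_disc[OF H_ul H this Gw]
    have "(\<lambda>j. (F ^^ n (Suc (r j))) w) \<longlonglongrightarrow> H (G w)" by (simp add: gap_step)
    moreover have "strict_mono (\<lambda>j. Suc (r j))"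
      using r by (simp add: strict_mono_def)
    from LIMSEQ_subseq_LIMSEQ[OF lim[OF w] this]
    have "(\<lambda>j. (F ^^ n (Suc (r j))) w) \<longlonglongrightarrow> G w" by (simp add: o_def)
    ultimately show ?thesis using LIMSEQ_unique by blast
  qed
  have H_id: "H w = w" if w: "w \<in> ball 0 1" for w
  proof (rule analytic_continuation_open[of "G ` ball 0 1" "ball 0 1" H "\<lambda>z. z"])
    show "H z = z" if "z \<in> G ` ball 0 1" for z using that H_fix by auto
  qed (use G_disc H w in \<open>simp_all add: holomorphic_on_ident\<close>)
  have "0 < n (Suc (r j)) - n (r j)" for j
    using strict_monoD[OF n, of "r j" "Suc (r j)"] by simp
  moreover have "(\<lambda>j. gap (r j) w) \<longlonglongrightarrow> w" if "norm w < 1" for w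
    using H_lim[OF that] H_id that by simp
  ultimately show ?thesis unfolding gap_def by (rule that[of "\<lambda>j. n (Suc (r j)) - n (r j)"])
qed

lemma funpow_pred_step:
  assumes "0 < m"
  shows "(f ^^ (m - 1)) (f x) = (f ^^ m) x" and "f ((f ^^ (m - 1)) x) = (f ^^ m) x"
proof -
  have m: "f ^^ m = f ^^ Suc (m - 1)" using assms by simp
  show "(f ^^ (m - 1)) (f x) = (f ^^ m) x" unfolding m funpow_Suc_right by simp
  show "f ((f ^^ (m - 1)) x) = (f ^^ m) x" unfolding m by simp
qed

lemma disc_self_map_inverse_from_iterates:
  assumes F: "F holomorphic_on ball 0 1" and F_disc: "\<And>w. norm w < 1 \<Longrightarrow> norm (F w) < 1"
    and m: "\<And>j. 0 < m j" and id: "\<And>w. norm w < 1 \<Longrightarrow> (\<lambda>j. (F ^^ m j) w) \<longlonglongrightarrow> w"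
  obtains P where "P holomorphic_on ball 0 1" "\<And>w. norm w < 1 \<Longrightarrow> norm (P w) < 1"
    "\<And>w. norm w < 1 \<Longrightarrow> P (F w) = w" "\<And>w. norm w < 1 \<Longrightarrow> F (P w) = w"
proof -
  note iter = funpow_holomorphic_self_map[OF F F_disc]
  define Fs where "Fs j = F ^^ (m j - 1)" for j
  have Fs: "Fs j holomorphic_on ball 0 1" "norm w < 1 \<Longrightarrow> norm (Fs j w) < 1" for j w
    using iter unfolding Fs_def by blast+
  obtain P r where P: "P holomorphic_on ball 0 1" and r: "strict_mono r"
    and P_lim: "\<And>w. norm w < 1 \<Longrightarrow> (\<lambda>j. Fs (r j) w) \<longlonglongrightarrow> P w"
    and "\<And>K. compact K \<Longrightarrow> K \<subseteq> ball 0 1 \<Longrightarrow> uniform_limit K (Fs \<circ> r) P sequentially"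
    using Montel_disc_self_maps[of Fs, OF Fs] by blast
  have Fs_step: "Fs j (F w) = (F ^^ m j) w" "F (Fs j w) = (F ^^ m j) w" for j w
    unfolding Fs_def by (rule funpow_pred_step[OF m])+
  have id_r: "(\<lambda>j. (F ^^ m (r j)) w) \<longlonglongrightarrow> w" if "norm w < 1" for w
    using LIMSEQ_subseq_LIMSEQ[OF id[OF that] r] by (simp add: o_def)
  have PF: "P (F w) = w" if w: "norm w < 1" for w
  proof -
    have "(\<lambda>j. Fs (r j) (F w)) \<longlonglongrightarrow> w" using id_r[OF w] by (simp add: Fs_step)
    with P_lim[OF F_disc[OF w]] show ?thesis by (rule LIMSEQ_unique)
  qed
  have "P (F 0) \<noteq> P (F (1/2))" by (simp add: PF)
  moreover have "F 0 \<in> ball 0 1" "F (1/2) \<in> ball 0 1" using F_disc by auto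
  ultimately have "\<exists>p\<in>ball 0 1. \<exists>q\<in>ball 0 1. P p \<noteq> P q" by blast
  then have "P ` ball 0 1 \<subseteq> ball 0 1"
    using nonconstant_limit_of_disc_self_maps(1)[OF P P_lim] Fs(2) by blast
  then have P_disc: "norm (P w) < 1" if "norm w < 1" for w
    using that by (meson image_subset_iff mem_ball_0)
  have FP: "F (P w) = w" if w: "norm w < 1" for w
  proof -
    have "isCont F (P w)"
      using holomorphic_on_imp_continuous_on[OF F] P_disc[OF w]
      by (simp add: continuous_on_eq_continuous_at)
    from isCont_tendsto_compose[OF this P_lim[OF w]]
    have "(\<lambda>j. (F ^^ m (r j)) w) \<longlonglongrightarrow> F (P w)" by (simp add: Fs_step)
    with id_r[OF w] show ?thesis by (rule LIMSEQ_unique[symmetric])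
  qed
  show ?thesis
    by (rule that[OF P P_disc PF FP])
qed

lemma disc_self_map_left_invertible_rotation:
  assumes H: "H holomorphic_on ball 0 1" and H0: "H 0 = 0"
    and H_disc: "\<And>z. norm z < 1 \<Longrightarrow> norm (H z) < 1"
    and K: "K holomorphic_on ball 0 1" and K0: "K 0 = 0"
    and K_disc: "\<And>z. norm z < 1 \<Longrightarrow> norm (K z) < 1"
    and KH: "\<And>z. norm z < 1 \<Longrightarrow> K (H z) = z"
  obtains \<alpha> where "norm \<alpha> = 1" "\<And>z. norm z < 1 \<Longrightarrow> H z = \<alpha> * z"
proof -
  have z0: "norm (1/2 :: complex) < 1" by simp
  have "norm (H (1/2)) = norm (1/2 :: complex)"
  proof (rule antisym)
    show "norm (H (1/2)) \<le> norm (1/2 :: complex)" by (rule Schwarz_Lemma(1)[OF H H0 H_disc z0])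
    have "norm (K (H (1/2))) \<le> norm (H (1/2))" by (rule Schwarz_Lemma(1)[OF K K0 K_disc H_disc[OF z0]])
    then show "norm (1/2 :: complex) \<le> norm (H (1/2))" using KH[OF z0] by simp
  qed
  then show ?thesis
    using Schwarz_Lemma(3)[OF H H0 H_disc z0] z0 that
    by (metis one_neq_zero zero_neq_numeral divide_eq_0_iff)
qed

lemma disc_automorphism_moebius:
  assumes F: "F holomorphic_on ball 0 1" and F_disc: "\<And>w. norm w < 1 \<Longrightarrow> norm (F w) < 1"
    and P: "P holomorphic_on ball 0 1" and P_disc: "\<And>w. norm w < 1 \<Longrightarrow> norm (P w) < 1"
    and PF: "\<And>w. norm w < 1 \<Longrightarrow> P (F w) = w" and FP: "\<And>w. norm w < 1 \<Longrightarrow> F (P w) = w"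
  obtains a u where "norm a < 1" "norm u = 1"
    "\<And>w. norm w < 1 \<Longrightarrow> F w = (a - w) * u / (1 - w * cnj a)"
proof -
  define a where "a = P 0"
  have a: "norm a < 1" using P_disc[of 0] by (simp add: a_def)
  define M where "M = Moebius_function 0 a"
  define M' where "M' = Moebius_function 0 (- a)"
  have M: "M holomorphic_on ball 0 1" "M' holomorphic_on ball 0 1"
    using Moebius_function_holomorphic a by (auto simp: M_def M'_def)
  have M_disc: "norm (M z) < 1" "norm (M' z) < 1" if "norm z < 1" for z
    using Moebius_function_norm_lt_1 a that by (auto simp: M_def M'_def)
  have MM': "M (M' z) = z" "M' (M z) = z" if "norm z < 1" for z
    using Moebius_function_compose a that by (auto simp: M_def M'_def)
  define H where "H z = F (M' z)" for z
  define K where "K z = M (P z)" for z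
  have Fa: "F a = 0" using FP[of 0] by (simp add: a_def)
  obtain \<alpha> where \<alpha>: "norm \<alpha> = 1" "\<And>z. norm z < 1 \<Longrightarrow> H z = \<alpha> * z"
  proof (rule disc_self_map_left_invertible_rotation)
    show "H holomorphic_on ball 0 1"
      unfolding H_def by (rule holomorphic_on_compose_disc[OF F M(2) M_disc(2)])
    show "K holomorphic_on ball 0 1"
      unfolding K_def by (rule holomorphic_on_compose_disc[OF M(1) P P_disc])
  qed (use Fa F_disc P_disc M_disc PF MM' in \<open>simp_all add: H_def K_def a_def M_def M'_def
      Moebius_function_of_zero Moebius_function_eq_zero\<close>)
  show ?thesis
  proof (rule that[of a "- \<alpha>"])
    fix w :: complex assume w: "norm w < 1"
    have "F w = H (M w)" using MM'(2)[OF w] by (simp add: H_def)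
    also have "\<dots> = \<alpha> * M w" by (rule \<alpha>(2)[OF M_disc(1)[OF w]])
    also have "\<dots> = (a - w) * (- \<alpha>) / (1 - w * cnj a)"
      by (simp add: M_def Moebius_function_simple algebra_simps)
    finally show "F w = (a - w) * (- \<alpha>) / (1 - w * cnj a)" .
  qed (use a \<alpha>(1) in auto)
qed

lemma nonconstant_iterate_limit_moebius:
  assumes F: "F holomorphic_on ball 0 1" and F_disc: "\<And>w. norm w < 1 \<Longrightarrow> norm (F w) < 1"
    and n: "strict_mono n"
    and ul: "\<And>K. compact K \<Longrightarrow> K \<subseteq> ball 0 1 \<Longrightarrow> uniform_limit K (\<lambda>k. F ^^ n k) G sequentially"
    and nc: "\<exists>p\<in>ball 0 1. \<exists>q\<in>ball 0 1. G p \<noteq> G q"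
  obtains a u where "norm a < 1" "norm u = 1"
    "\<And>w. norm w < 1 \<Longrightarrow> F w = (a - w) * u / (1 - w * cnj a)"
proof -
  note iter = funpow_holomorphic_self_map[OF F F_disc]
  have G: "G holomorphic_on ball 0 1"
    using iter by (intro holomorphic_on_disc_locally_uniform_limit[OF _ ul]) auto
  have lim: "(\<lambda>k. (F ^^ n k) w) \<longlonglongrightarrow> G w" if "norm w < 1" for w
    using that by (intro tendsto_uniform_limitI[OF ul[of "{w}"]]) auto
  obtain m where "\<And>j. 0 < m j" "\<And>w. norm w < 1 \<Longrightarrow> (\<lambda>j. (F ^^ m j) w) \<longlonglongrightarrow> w"
    using iterates_tend_to_identity[OF F F_disc n lim G nc] by blast
  then obtain P where "P holomorphic_on ball 0 1" "\<And>w. norm w < 1 \<Longrightarrow> norm (P w) < 1"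
    "\<And>w. norm w < 1 \<Longrightarrow> P (F w) = w" "\<And>w. norm w < 1 \<Longrightarrow> F (P w) = w"
    using disc_self_map_inverse_from_iterates[OF F F_disc] by blast
  then show ?thesis
    using disc_automorphism_moebius[OF F F_disc] that by blast
qed

lemma moebius_nonvanishing:
  fixes a w :: complex
  assumes "norm a < 1" "norm w < 1"
  shows "w * cnj a \<noteq> 1"
proof -
  have "norm (w * cnj a) < 1 * 1" using assms by (intro norm_mult_less) simp_all
  then show ?thesis by auto
qed

section \<open>The slice regular extension of a holomorphic function on the disc\<close>

text \<open>The slice regular function whose restriction to \<open>\<bbbB>\<^sub>I \<cong> \<bbbD>\<close> (via \<open>slice_emb I\<close>) is \<open>G\<close>.\<close>

definition slice_ext :: "quat \<Rightarrow> (complex \<Rightarrow> complex) \<Rightarrow> quat \<Rightarrow> quat" where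
  "slice_ext I G = ps (\<lambda>n. slice_emb I (taylor_coeff G n))"

lemma slice_ext_cong: "(\<And>w. norm w < 1 \<Longrightarrow> G w = H w) \<Longrightarrow> slice_ext I G = slice_ext I H"
  unfolding slice_ext_def by (metis taylor_coeff_cong)

context
  fixes I :: quat
  assumes I: "I \<in> Sph"
begin

lemma slice_ext_sums:
  assumes G: "G holomorphic_on ball 0 1" and J: "J \<in> Sph" and z: "norm z < 1"
  shows "(\<lambda>n. qpow (slice_emb J z) n \<otimes> slice_emb I (taylor_coeff G n)) sums
    (repr_left J I \<otimes> slice_emb I (G z) + repr_right J I \<otimes> slice_emb I (G (cnj z)))"
  unfolding qpow_slice_emb_qmult[OF I J]
  by (intro sums_add bounded_linear.sums[OF bounded_linear_qmult_right]
      bounded_linear.sums[OF bounded_linear_slice_emb] taylor_coeff_sums[OF G]) (use z in auto)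

lemma slice_ext_repr:
  assumes G: "G holomorphic_on ball 0 1" and J: "J \<in> Sph" and z: "norm z < 1"
  shows "slice_ext I G (slice_emb J z)
    = repr_left J I \<otimes> slice_emb I (G z) + repr_right J I \<otimes> slice_emb I (G (cnj z))"
  unfolding slice_ext_def ps_def using sums_unique[OF slice_ext_sums[OF assms]] by simp

lemma has_ps_slice_ext:
  assumes G: "G holomorphic_on ball 0 1"
  shows "has_ps (\<lambda>n. slice_emb I (taylor_coeff G n)) (slice_ext I G)"
  unfolding has_ps_def
proof
  fix q assume "q \<in> BB"
  then obtain J z where "J \<in> Sph" "q = slice_emb J z" "norm z < 1" by (rule BB_slice_embE)
  then show "(\<lambda>n. qpow q n \<otimes> slice_emb I (taylor_coeff G n)) sums slice_ext I G q"
    using slice_ext_sums[OF G] slice_ext_repr[OF G] by simp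
qed

lemma slice_ext_slice_emb:
  assumes G: "G holomorphic_on ball 0 1" and w: "norm w < 1"
  shows "slice_ext I G (slice_emb I w) = slice_emb I (G w)"
  using slice_ext_repr[OF G I w] by (simp add: repr_left_same[OF I] repr_right_same[OF I])

lemma coeffs_slice_ext:
  assumes G: "G holomorphic_on ball 0 1" and eq: "\<And>q. q \<in> BB \<Longrightarrow> \<phi> q = slice_ext I G q"
  shows "coeffs \<phi> = (\<lambda>n. slice_emb I (taylor_coeff G n))"
  by (rule coeffs_eq, rule has_ps_cong[OF has_ps_slice_ext[OF G]]) (simp add: eq)

lemma slice_regular_slice_ext:
  assumes G: "G holomorphic_on ball 0 1" and eq: "\<And>q. q \<in> BB \<Longrightarrow> \<phi> q = slice_ext I G q"
  shows "slice_regular \<phi>"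
  unfolding slice_regular_def using has_ps_cong[OF has_ps_slice_ext[OF G]] eq by metis

lemma slice_ext_affine:
  assumes q: "q \<in> BB"
  shows "slice_ext I (\<lambda>w. \<alpha> + w * \<beta>) q = slice_emb I \<alpha> + q \<otimes> slice_emb I \<beta>"
proof -
  obtain J z where J: "J \<in> Sph" and q_eq: "q = slice_emb J z" and z: "norm z < 1"
    using q by (rule BB_slice_embE)
  have "(\<lambda>w. \<alpha> + w * \<beta>) holomorphic_on ball 0 1" by (intro holomorphic_intros)
  then have "slice_ext I (\<lambda>w. \<alpha> + w * \<beta>) q
      = repr_left J I \<otimes> slice_emb I (\<alpha> + z * \<beta>) + repr_right J I \<otimes> slice_emb I (\<alpha> + cnj z * \<beta>)"
    using slice_ext_repr[OF _ J z] q_eq by simp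
  also have "\<dots> = (repr_left J I \<otimes> slice_emb I \<alpha> + repr_right J I \<otimes> slice_emb I \<alpha>)
      + (repr_left J I \<otimes> slice_emb I z + repr_right J I \<otimes> slice_emb I (cnj z)) \<otimes> slice_emb I \<beta>"
    by (simp add: slice_emb_add slice_emb_mult[OF I] qmult_add_right qmult_add_left qmult_assoc)
  also have "\<dots> = slice_emb I \<alpha> + q \<otimes> slice_emb I \<beta>"
    unfolding repr_combination slice_emb_repr[OF I, symmetric] q_eq ..
  finally show ?thesis .
qed

lemma slice_ext_one: "q \<in> BB \<Longrightarrow> slice_ext I (\<lambda>w. 1) q = qone"
  using slice_ext_affine[of q 1 0] by simp

lemma sprod_slice_ext:
  assumes G: "G holomorphic_on ball 0 1" and H: "H holomorphic_on ball 0 1"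
    and cf: "coeffs \<phi> = (\<lambda>n. slice_emb I (taylor_coeff G n))"
    and cg: "coeffs \<psi> = (\<lambda>n. slice_emb I (taylor_coeff H n))"
  shows "\<phi> \<star> \<psi> = slice_ext I (\<lambda>w. G w * H w)"
  unfolding sprod_def slice_ext_def cf cg taylor_coeff_mult[OF G H] slice_emb_sum slice_emb_mult[OF I] ..

lemma spow_slice_ext:
  assumes G: "G holomorphic_on ball 0 1" and eq: "\<And>q. q \<in> BB \<Longrightarrow> \<phi> q = slice_ext I G q"
  shows "q \<in> BB \<Longrightarrow> spow \<phi> n q = slice_ext I (\<lambda>w. G w ^ n) q"
proof (induction n arbitrary: q)
  case 0
  then show ?case using slice_ext_one by simp
next
  case (Suc n)
  have Gn: "(\<lambda>w. G w ^ n) holomorphic_on ball 0 1" using G by (intro holomorphic_intros)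
  have "\<phi> \<star> spow \<phi> n = slice_ext I (\<lambda>w. G w * G w ^ n)"
    by (rule sprod_slice_ext[OF G Gn coeffs_slice_ext[OF G eq] coeffs_slice_ext[OF Gn Suc.IH]])
  then show ?case by simp
qed

lemma rcomp_slice_ext:
  assumes F: "F holomorphic_on ball 0 1" and G: "G holomorphic_on ball 0 1"
    and G_disc: "\<And>w. norm w < 1 \<Longrightarrow> norm (G w) < 1"
    and f_eq: "\<And>q. q \<in> BB \<Longrightarrow> f q = slice_ext I F q"
    and \<phi>_eq: "\<And>q. q \<in> BB \<Longrightarrow> \<phi> q = slice_ext I G q"
    and q: "q \<in> BB"
  shows "rcomp f \<phi> q = slice_ext I (\<lambda>w. F (G w)) q"
proof -
  obtain J z where J: "J \<in> Sph" and q_eq: "q = slice_emb J z" and z: "norm z < 1"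
    using q by (rule BB_slice_embE)
  have Gn: "(\<lambda>w. G w ^ n) holomorphic_on ball 0 1" for n using G by (intro holomorphic_intros)
  have FG: "(\<lambda>w. F (G w)) holomorphic_on ball 0 1"
    by (rule holomorphic_on_compose_disc[OF F G G_disc])
  have summand: "spow \<phi> n q \<otimes> coeffs f n = repr_left J I \<otimes> slice_emb I (G z ^ n * taylor_coeff F n)
      + repr_right J I \<otimes> slice_emb I (G (cnj z) ^ n * taylor_coeff F n)" for n
    using spow_slice_ext[OF G \<phi>_eq q] slice_ext_repr[OF Gn J z] q_eq
    by (simp add: coeffs_slice_ext[OF F f_eq] qmult_add_left qmult_assoc slice_emb_mult[OF I])
  have "(\<lambda>n. spow \<phi> n q \<otimes> coeffs f n) sums
      (repr_left J I \<otimes> slice_emb I (F (G z)) + repr_right J I \<otimes> slice_emb I (F (G (cnj z))))"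
    unfolding summand
    by (intro sums_add bounded_linear.sums[OF bounded_linear_qmult_right]
        bounded_linear.sums[OF bounded_linear_slice_emb] taylor_coeff_sums[OF F] G_disc)
       (use z in auto)
  then show ?thesis
    unfolding rcomp_def slice_ext_repr[OF FG J z, folded q_eq] by (rule sums_unique[symmetric])
qed

lemma slice_ext_tendsto:
  assumes hol: "\<And>k. Fs k holomorphic_on ball 0 1"
    and lim: "\<And>w. norm w < 1 \<Longrightarrow> (\<lambda>k. Fs k w) \<longlonglongrightarrow> G w"
    and J: "J \<in> Sph" and z: "norm z < 1"
  shows "(\<lambda>k. slice_ext I (Fs k) (slice_emb J z))
    \<longlonglongrightarrow> repr_left J I \<otimes> slice_emb I (G z) + repr_right J I \<otimes> slice_emb I (G (cnj z))"
  unfolding slice_ext_repr[OF hol J z]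
  by (intro tendsto_add bounded_linear.tendsto[OF bounded_linear_qmult_right]
      bounded_linear.tendsto[OF bounded_linear_slice_emb] lim) (use z in auto)

lemma riter_eq_slice_ext:
  assumes F: "F holomorphic_on ball 0 1" and F_disc: "\<And>w. norm w < 1 \<Longrightarrow> norm (F w) < 1"
    and f_eq: "\<And>q. q \<in> BB \<Longrightarrow> f q = slice_ext I F q"
  shows "q \<in> BB \<Longrightarrow> riter f (Suc k) q = slice_ext I (F ^^ Suc k) q"
proof (induction k arbitrary: q)
  case 0
  then show ?case using f_eq by simp
next
  case (Suc k)
  note iter = funpow_holomorphic_self_map[OF F F_disc, of "Suc k"]
  have "riter f (Suc (Suc k)) q = rcomp f (riter f (Suc k)) q" by simp
  also have "\<dots> = slice_ext I (\<lambda>w. F ((F ^^ Suc k) w)) q"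
    using iter by (intro rcomp_slice_ext[OF F _ _ f_eq Suc.IH Suc.prems]) (auto simp: o_def)
  finally show ?case by simp
qed

lemma coeffs_sinv_slice_ext:
  assumes D: "D holomorphic_on ball 0 1" and H: "H holomorphic_on ball 0 1"
    and DH: "\<And>w. norm w < 1 \<Longrightarrow> D w * H w = 1"
    and \<phi>_eq: "\<And>q. q \<in> BB \<Longrightarrow> \<phi> q = slice_ext I D q"
  shows "coeffs (sinv \<phi>) = (\<lambda>n. slice_emb I (taylor_coeff H n))"
proof -
  define h where "h = slice_ext I H"
  have h: "slice_regular h" unfolding h_def by (rule slice_regular_slice_ext[OF H]) simp
  have \<phi>: "slice_regular \<phi>" by (rule slice_regular_slice_ext[OF D \<phi>_eq])
  have ch: "coeffs h = (\<lambda>n. slice_emb I (taylor_coeff H n))"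
    unfolding h_def by (rule coeffs_slice_ext[OF H]) simp
  have "\<phi> \<star> h = slice_ext I (\<lambda>w. D w * H w)"
    by (rule sprod_slice_ext[OF D H coeffs_slice_ext[OF D \<phi>_eq] ch])
  also have "\<dots> = slice_ext I (\<lambda>w. 1)" by (rule slice_ext_cong) (use DH in simp)
  finally have \<phi>h: "\<forall>q\<in>BB. (\<phi> \<star> h) q = qone" by (simp add: slice_ext_one)
  \<comment> \<open>\<open>sinv \<phi>\<close> is just some right \<open>\<star>\<close>-inverse; cancelling the nonzero constant coefficient of \<open>\<phi>\<close>
    in the Cauchy product shows that its coefficients are those of \<open>h\<close>.\<close>
  define h' where "h' = sinv \<phi>"
  have h': "slice_regular h' \<and> (\<forall>q\<in>BB. (\<phi> \<star> h') q = qone)"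
    unfolding h'_def sinv_def by (rule someI[where x=h]) (use h \<phi>h in simp)
  have conv: "(\<lambda>n. \<Sum>k\<le>n. coeffs \<phi> k \<otimes> coeffs h' (n - k))
      = (\<lambda>n. \<Sum>k\<le>n. coeffs \<phi> k \<otimes> coeffs h (n - k))"
  proof (rule has_ps_unique)
    show "has_ps (\<lambda>n. \<Sum>k\<le>n. coeffs \<phi> k \<otimes> coeffs h' (n - k)) (\<lambda>q. qone)"
      by (rule has_ps_cong[OF has_ps_sprod[OF \<phi>]]) (use h' in auto)
    show "has_ps (\<lambda>n. \<Sum>k\<le>n. coeffs \<phi> k \<otimes> coeffs h (n - k)) (\<lambda>q. qone)"
      by (rule has_ps_cong[OF has_ps_sprod[OF \<phi> h]]) (use \<phi>h in auto)
  qed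
  have "slice_emb I (D 0) \<noteq> 0"
    using DH[of 0] norm_slice_emb[OF I, of "D 0"] by auto
  then have "coeffs \<phi> 0 \<noteq> 0"
    by (simp add: coeffs_slice_ext[OF D \<phi>_eq] taylor_coeff_0)
  then have "coeffs h' n = coeffs h n" for n
    using convolution_cancel_left[where d="coeffs \<phi>"] fun_cong[OF conv] by blast
  then show ?thesis by (auto simp: h'_def ch)
qed

end

section \<open>Slice preserving functions\<close>

context
  fixes I :: quat
  assumes I: "I \<in> Sph"
begin

lemma has_ps_coeffs_in_slice:
  assumes a: "has_ps a f" and pres: "\<And>w. norm w < 1 \<Longrightarrow> f (slice_emb I w) \<in> slice I"
  shows "a n \<in> slice I"
proof -
  \<comment> \<open>Project away from \<open>\<complex>\<^sub>I\<close>: on the real diameter \<open>f\<close> has values in \<open>\<complex>\<^sub>I\<close>, and the real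
    diameter determines the coefficients.\<close>
  define Pr where "Pr q = q - slice_emb I (slice_coord I q)" for q
  have Pr: "bounded_linear Pr"
    unfolding Pr_def
    by (intro bounded_linear_sub bounded_linear_ident
        bounded_linear_compose[OF bounded_linear_slice_emb bounded_linear_slice_coord])
  have Pr_slice: "Pr q = 0 \<longleftrightarrow> q \<in> slice I" for q
    using slice_emb_coord[OF I, of q] slice_eq_range[OF I] by (auto simp: Pr_def)
  have "Pr (a n) = 0"
  proof (rule quat_powser_zero_coeffs)
    fix x :: real assume x: "\<bar>x\<bar> < 1"
    have "Pr (f (x *\<^sub>R qone)) = 0"
      using pres[of "of_real x"] x Pr_slice by (simp add: slice_emb_of_real)
    then show "(\<lambda>n. x^n *\<^sub>R Pr (a n)) sums 0"
      using bounded_linear.sums[OF Pr has_ps_real_axis[OF a x]]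
      by (simp add: linear_scale[OF bounded_linear.linear[OF Pr]])
  qed
  then show ?thesis using Pr_slice by simp
qed

lemma slice_preserving_eq_slice_ext:
  assumes a: "has_ps a f" and pres: "\<And>w. norm w < 1 \<Longrightarrow> f (slice_emb I w) \<in> slice I"
  defines "F \<equiv> \<lambda>w. slice_coord I (f (slice_emb I w))"
  shows "F holomorphic_on ball 0 1" and "\<And>q. q \<in> BB \<Longrightarrow> f q = slice_ext I F q"
proof -
  define \<alpha> where "\<alpha> n = slice_coord I (a n)" for n
  have a_eq: "a = (\<lambda>n. slice_emb I (\<alpha> n))"
    using slice_emb_coord[OF I has_ps_coeffs_in_slice[OF a pres]] by (auto simp: \<alpha>_def)
  have F_sums: "(\<lambda>n. \<alpha> n * w^n) sums F w" if w: "norm w < 1" for w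
  proof -
    have "(\<lambda>n. qpow (slice_emb I w) n \<otimes> a n) sums f (slice_emb I w)"
      using a w by (simp add: has_ps_def slice_emb_in_BB_iff[OF I])
    then have "(\<lambda>n. slice_emb I (\<alpha> n * w^n)) sums f (slice_emb I w)"
      by (simp add: a_eq qpow_slice_emb[OF I] slice_emb_mult[OF I, symmetric] mult.commute)
    from bounded_linear.sums[OF bounded_linear_slice_coord[of I] this] show ?thesis
      by (simp add: F_def slice_coord_emb[OF I])
  qed
  show F: "F holomorphic_on ball 0 1"
    by (rule power_series_holomorphic[where a=\<alpha>]) (use F_sums in auto)
  have "has_ps a (slice_ext I F)"
    using has_ps_slice_ext[OF I F] by (simp add: a_eq taylor_coeff_unique[OF F_sums])
  then show "f q = slice_ext I F q" if "q \<in> BB" for q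
    using a that unfolding has_ps_def by (blast intro: sums_unique2)
qed

lemma slice_preserving_self_map_restriction:
  assumes reg: "slice_regular f" and maps: "\<forall>q\<in>BB. f q \<in> BB"
    and slice_pres: "f ` BB_slice I \<subseteq> BB_slice I"
  obtains F where "F holomorphic_on ball 0 1" "\<And>w. norm w < 1 \<Longrightarrow> norm (F w) < 1"
    "\<And>q. q \<in> BB \<Longrightarrow> f q = slice_ext I F q"
proof -
  have pres: "f (slice_emb I w) \<in> slice I" if "norm w < 1" for w
    using slice_pres that by (auto simp: BB_slice_def slice_emb_in_BB_iff[OF I] slice_eq_range[OF I])
  define F where "F w = slice_coord I (f (slice_emb I w))" for w
  have F: "F holomorphic_on ball 0 1" and f_eq: "\<And>q. q \<in> BB \<Longrightarrow> f q = slice_ext I F q"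
    using slice_preserving_eq_slice_ext[OF has_ps_coeffs[OF reg] pres] unfolding F_def by blast+
  have "norm (F w) < 1" if w: "norm w < 1" for w
  proof -
    have "f (slice_emb I w) \<in> BB" using maps w by (simp add: slice_emb_in_BB_iff[OF I])
    then show ?thesis
      using f_eq[of "slice_emb I w"] w by (simp add: slice_emb_in_BB_iff[OF I] slice_ext_slice_emb[OF I F])
  qed
  then show ?thesis by (rule that[OF F _ f_eq])
qed

end

section \<open>Transfer between a slice and the disc\<close>

lemma uniform_limit_slice_restriction:
  assumes I: "I \<in> Sph" and K: "compact K" "K \<subseteq> ball 0 1"
    and ul: "\<And>K. compact K \<Longrightarrow> K \<subseteq> BB \<Longrightarrow> uniform_limit K \<phi>s g sequentially"
    and restr: "\<And>k w. norm w < 1 \<Longrightarrow> \<phi>s k (slice_emb I w) = slice_emb I (Fs k w)"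
  shows "uniform_limit K Fs (\<lambda>w. slice_coord I (g (slice_emb I w))) sequentially"
proof -
  have "compact (slice_emb I ` K)"
    by (rule compact_continuous_image[OF linear_continuous_on[OF bounded_linear_slice_emb] K(1)])
  moreover have "slice_emb I ` K \<subseteq> BB"
    using K(2) by (auto simp: slice_emb_in_BB_iff[OF I])
  ultimately have "uniform_limit (slice_emb I ` K) \<phi>s g sequentially" by (rule ul)
  then have "uniform_limit K (\<lambda>k w. \<phi>s k (slice_emb I w)) (\<lambda>w. g (slice_emb I w)) sequentially"
    by (rule uniform_limit_compose'[where h="slice_emb I"]) blast
  from bounded_linear.uniform_limit[OF bounded_linear_slice_coord[of I] this]
  have "uniform_limit K (\<lambda>k w. slice_coord I (\<phi>s k (slice_emb I w)))
      (\<lambda>w. slice_coord I (g (slice_emb I w))) sequentially" .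
  moreover have "slice_coord I (\<phi>s k (slice_emb I w)) = Fs k w" if "w \<in> K" for k w
    using that K(2) restr by (auto simp: slice_coord_emb[OF I])
  ultimately show ?thesis
    using uniform_limit_cong'[of K "\<lambda>k w. slice_coord I (\<phi>s k (slice_emb I w))" Fs] by simp
qed

lemma slice_ext_limit_nonconstant:
  assumes I: "I \<in> Sph" and hol: "\<And>k. Fs k holomorphic_on ball 0 1"
    and lim_G: "\<And>w. norm w < 1 \<Longrightarrow> (\<lambda>k. Fs k w) \<longlonglongrightarrow> G w"
    and lim_g: "\<And>q. q \<in> BB \<Longrightarrow> (\<lambda>k. slice_ext I (Fs k) q) \<longlonglongrightarrow> g q"
    and nc: "\<exists>p\<in>BB. \<exists>q\<in>BB. g p \<noteq> g q"
  shows "\<exists>p\<in>ball 0 1. \<exists>q\<in>ball 0 1. G p \<noteq> G q"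
proof (rule ccontr)
  assume "\<not> ?thesis"
  then have G_const: "G w = G 0" if "norm w < 1" for w
    using that by (metis mem_ball_0 norm_zero zero_less_one)
  have "g q = slice_emb I (G 0)" if "q \<in> BB" for q
  proof -
    obtain J z where J: "J \<in> Sph" and q_eq: "q = slice_emb J z" and z: "norm z < 1"
      using \<open>q \<in> BB\<close> by (rule BB_slice_embE)
    have "(\<lambda>k. slice_ext I (Fs k) q) \<longlonglongrightarrow>
        repr_left J I \<otimes> slice_emb I (G z) + repr_right J I \<otimes> slice_emb I (G (cnj z))"
      unfolding q_eq by (rule slice_ext_tendsto[OF I hol lim_G J z])
    also have "repr_left J I \<otimes> slice_emb I (G z) + repr_right J I \<otimes> slice_emb I (G (cnj z))
        = slice_emb I (G 0)"
      using G_const[OF z] G_const[of "cnj z"] z by (simp add: repr_combination)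
    finally show ?thesis using lim_g[OF that] LIMSEQ_unique by blast
  qed
  then show False using nc by auto
qed

lemma sinv_sprod_moebius_eq_slice_ext:
  assumes I: "I \<in> Sph" and a: "norm a < 1"
  shows "sinv (\<lambda>q. qone - q \<otimes> qcnj (slice_emb I a)) \<star> (\<lambda>q. (slice_emb I a - q) \<otimes> slice_emb I u)
    = slice_ext I (\<lambda>w. (a - w) * u / (1 - w * cnj a))"
proof -
  define D where "D w = 1 + w * (- cnj a)" for w
  define H where "H w = 1 / (1 - w * cnj a)" for w
  define N where "N w = a * u + w * (- u)" for w
  have nz: "w * cnj a \<noteq> 1" if "norm w < 1" for w
    by (rule moebius_nonvanishing[OF a that])
  have D: "D holomorphic_on ball 0 1" and N: "N holomorphic_on ball 0 1"
    unfolding D_def N_def by (intro holomorphic_intros)+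
  have H: "H holomorphic_on ball 0 1"
    unfolding H_def by (intro holomorphic_intros) (use nz in simp)
  have D_eq: "qone - q \<otimes> qcnj (slice_emb I a) = slice_ext I D q" if "q \<in> BB" for q
    unfolding D_def slice_ext_affine[OF I that]
    by (simp add: slice_emb_minus qcnj_slice_emb[OF I] qmult_minus_right)
  have N_eq: "(slice_emb I a - q) \<otimes> slice_emb I u = slice_ext I N q" if "q \<in> BB" for q
    unfolding N_def slice_ext_affine[OF I that]
    by (simp add: slice_emb_minus slice_emb_mult[OF I] qmult_minus_right qmult_diff_left)
  have "sinv (\<lambda>q. qone - q \<otimes> qcnj (slice_emb I a)) \<star> (\<lambda>q. (slice_emb I a - q) \<otimes> slice_emb I u)
      = slice_ext I (\<lambda>w. H w * N w)"
  proof (rule sprod_slice_ext[OF I H N])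
    show "coeffs (sinv (\<lambda>q. qone - q \<otimes> qcnj (slice_emb I a))) = (\<lambda>n. slice_emb I (taylor_coeff H n))"
      by (rule coeffs_sinv_slice_ext[OF I D H _ D_eq]) (simp add: D_def H_def nz)
    show "coeffs (\<lambda>q. (slice_emb I a - q) \<otimes> slice_emb I u) = (\<lambda>n. slice_emb I (taylor_coeff N n))"
      by (rule coeffs_slice_ext[OF I N N_eq])
  qed
  also have "\<dots> = slice_ext I (\<lambda>w. (a - w) * u / (1 - w * cnj a))"
    by (rule slice_ext_cong) (simp add: H_def N_def left_diff_distrib)
  finally show ?thesis .
qed

lemma iterate_subsequence_limit_restriction:
  assumes I: "I \<in> Sph" and F: "F holomorphic_on ball 0 1"
    and F_disc: "\<And>w. norm w < 1 \<Longrightarrow> norm (F w) < 1"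
    and f_eq: "\<And>q. q \<in> BB \<Longrightarrow> f q = slice_ext I F q"
    and ul: "\<And>K. compact K \<Longrightarrow> K \<subseteq> BB \<Longrightarrow> uniform_limit K (\<lambda>k. riter f (Suc (\<sigma> k))) g sequentially"
    and nc: "\<exists>p\<in>BB. \<exists>q\<in>BB. g p \<noteq> g q"
  obtains G where
    "\<And>K. compact K \<Longrightarrow> K \<subseteq> ball 0 1 \<Longrightarrow> uniform_limit K (\<lambda>k. F ^^ Suc (\<sigma> k)) G sequentially"
    "\<exists>p\<in>ball 0 1. \<exists>q\<in>ball 0 1. G p \<noteq> G q"
proof -
  note iter = funpow_holomorphic_self_map[OF F F_disc]
  have riter_eq: "riter f (Suc k) q = slice_ext I (F ^^ Suc k) q" if "q \<in> BB" for k q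
    by (rule riter_eq_slice_ext[OF I F F_disc f_eq that])
  define G where "G w = slice_coord I (g (slice_emb I w))" for w
  have ul_F: "uniform_limit K (\<lambda>k. F ^^ Suc (\<sigma> k)) G sequentially"
    if "compact K" "K \<subseteq> ball 0 1" for K
    unfolding G_def
  proof (rule uniform_limit_slice_restriction[OF I that ul])
    show "riter f (Suc (\<sigma> k)) (slice_emb I w) = slice_emb I ((F ^^ Suc (\<sigma> k)) w)"
      if "norm w < 1" for k w
      using riter_eq[of "slice_emb I w" "\<sigma> k"] slice_ext_slice_emb[OF I conjunct1[OF iter] that] that
      by (simp add: slice_emb_in_BB_iff[OF I] del: riter.simps funpow.simps)
  qed
  have "\<exists>p\<in>ball 0 1. \<exists>q\<in>ball 0 1. G p \<noteq> G q"
  proof (rule slice_ext_limit_nonconstant[OF I _ _ _ nc])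
    show "(F ^^ Suc (\<sigma> k)) holomorphic_on ball 0 1" for k using iter by blast
    show "(\<lambda>k. (F ^^ Suc (\<sigma> k)) w) \<longlonglongrightarrow> G w" if "norm w < 1" for w
      using that by (intro tendsto_uniform_limitI[OF ul_F[of "{w}"]]) auto
    show "(\<lambda>k. slice_ext I (F ^^ Suc (\<sigma> k)) q) \<longlonglongrightarrow> g q" if "q \<in> BB" for q
      using tendsto_uniform_limitI[OF ul[of "{q}"]] that by (simp add: riter_eq del: riter.simps)
  qed
  with ul_F show ?thesis by (rule that)
qed

theorem proposition5p3:
  fixes f :: "quat \<Rightarrow> quat" and I :: quat
  assumes reg: "slice_regular f"
    and maps: "\<forall>q\<in>BB. f q \<in> BB"
    and I: "I \<in> Sph"
    and slice_pres: "f ` BB_slice I \<subseteq> BB_slice I"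
    and subseq: "\<exists>\<sigma> g. strict_mono \<sigma>
        \<and> (\<forall>K. compact K \<and> K \<subseteq> BB \<longrightarrow>
               uniform_limit K (\<lambda>k. riter f (Suc (\<sigma> k))) g sequentially)
        \<and> (\<exists>p\<in>BB. \<exists>q\<in>BB. g p \<noteq> g q)"
  shows "\<exists>a u. a \<in> BB \<and> norm u = 1 \<and>
           (\<forall>q\<in>BB. f q = (sinv (\<lambda>q. qone - q \<otimes> qcnj a) \<star> (\<lambda>q. (a - q) \<otimes> u)) q)"
proof -
  obtain \<sigma> g where \<sigma>: "strict_mono \<sigma>"
    and ul: "\<And>K. compact K \<Longrightarrow> K \<subseteq> BB \<Longrightarrow> uniform_limit K (\<lambda>k. riter f (Suc (\<sigma> k))) g sequentially"
    and nc: "\<exists>p\<in>BB. \<exists>q\<in>BB. g p \<noteq> g q"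
    using subseq by blast
  obtain F where F: "F holomorphic_on ball 0 1" and F_disc: "\<And>w. norm w < 1 \<Longrightarrow> norm (F w) < 1"
    and f_eq: "\<And>q. q \<in> BB \<Longrightarrow> f q = slice_ext I F q"
    using slice_preserving_self_map_restriction[OF I reg maps slice_pres] by blast
  obtain G where
    ul_F: "\<And>K. compact K \<Longrightarrow> K \<subseteq> ball 0 1 \<Longrightarrow> uniform_limit K (\<lambda>k. F ^^ Suc (\<sigma> k)) G sequentially"
    and nc_G: "\<exists>p\<in>ball 0 1. \<exists>q\<in>ball 0 1. G p \<noteq> G q"
    using iterate_subsequence_limit_restriction[OF I F F_disc f_eq ul nc] by blast
  have "strict_mono (\<lambda>k. Suc (\<sigma> k))" using \<sigma> by (simp add: strict_mono_def)
  then obtain a u where a: "norm a < 1" and u: "norm u = 1"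
    and F_eq: "\<And>w. norm w < 1 \<Longrightarrow> F w = (a - w) * u / (1 - w * cnj a)"
    using nonconstant_iterate_limit_moebius[OF F F_disc _ ul_F nc_G] by blast
  show ?thesis
  proof (intro exI conjI ballI)
    show "slice_emb I a \<in> BB" "norm (slice_emb I u) = 1"
      using a u by (simp_all add: slice_emb_in_BB_iff[OF I] norm_slice_emb[OF I])
    show "f q = (sinv (\<lambda>q. qone - q \<otimes> qcnj (slice_emb I a)) \<star> (\<lambda>q. (slice_emb I a - q) \<otimes> slice_emb I u)) q"
      if "q \<in> BB" for q
      unfolding sinv_sprod_moebius_eq_slice_ext[OF I a] f_eq[OF that]
      by (simp add: slice_ext_cong[OF F_eq])
  qed
qed

end
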